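(* Let $\mathcal H$ be a complex separable Hilbert space with orthonormal basis $(|k\rangle)_{k\in\mathbb Z}$, let $Z$ be the selfadjoint operator with $Z|k\rangle=k|k\rangle$, and $V_x=e^{ixZ}$, $x\in\mathbb R$. Let $B:\mathbb Z\times\mathbb Z\to\mathbb D$ ($\mathbb D$ the closed unit disc) be positive semidefinite with $B(k,k)=1$ for all $k$, and let $E^B$ be the semispectral measure on the Borel sets of $[0,2\pi)$ given weakly by $$E^B(X)=\sum_{k,l\in\mathbb Z}B(k,l)\,i_X(k,l)\,|k\rangle\langle l|,\qquad i_X(k,l)=\frac1{2\pi}\int_Xe^{i(k-l)x}\,dx.$$ Let $E^1$ denote $E^B$ for the constant function $B\equiv1$. Then the following are equivalent: (a) $E^B$ is noiseless, i.e. $S^B_E:=E^B[2]-E^B[1]^2=0$, where $E^B[j]=\int_0^{2\pi}x^j\,dE^B(x)$ (weakly defined moment operators); (b) $B$ is noiseless, i.e. $s_n^B(l)=0$ for all $n\in\mathbb Z$ and all $l\in\{0,1,2,\ldots\}$, where $s_n^B(l)=(\pi/\sqrt3)^l\big(1-\frac3{\pi^2}\sum_{k\in\mathbb Z,k\neq n}\frac{|B(n,k)|^l}{(k-n)^2}\big)$; (c) $B$ takes values in the unit circle $\mathbb T$; (d) $E^B\simeq E^1$, i.e. there is a unitary $W$ on $\mathcal H$ with $WV_xW^*=V_x$ for all $x\in\mathbb R$ and $WE^1(X)W^*=E^B(X)$ for all Borel $X\subseteq[0,2\pi)$.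
   Context: Such $E^B$ are exactly the semispectral measures $E$ on $[0,2\pi)$ satisfying $V_xE(X)V_x^*=E(X\oplus x)$, where $X\oplus x=\{y\in[0,2\pi):(y-x)\bmod 2\pi\in X\}$ (translation mod $2\pi$ covariant box localization observables); $E^1$ is the canonical spectral measure. One has $\langle n|S^B_E|n\rangle=s_n^B(2)$ for all $n\in\mathbb Z$. *)

theory Defs
  imports "HOL-Analysis.Analysis"
begin

text \<open>The Hilbert space is l2(Z) with standard basis |k>, k in Z. Operators are
represented by their matrix elements M k l = <k|M|l> (weak definition).\<close>

type_synonym cmatrix = "int \<Rightarrow> int \<Rightarrow> complex"

definition bounded_matrix :: "cmatrix \<Rightarrow> bool" where
  "bounded_matrix M \<longleftrightarrow> (\<exists>C. \<forall>F f g. finite F \<longrightarrow>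
     cmod (\<Sum>k\<in>F. \<Sum>l\<in>F. cnj (f k) * M k l * g l)
       \<le> C * sqrt (\<Sum>k\<in>F. (cmod (f k))^2) * sqrt (\<Sum>l\<in>F. (cmod (g l))^2))"

definition mmult :: "cmatrix \<Rightarrow> cmatrix \<Rightarrow> cmatrix" where
  "mmult A C k l = (\<Sum>\<^sub>\<infinity>m. A k m * C m l)"

definition adjm :: "cmatrix \<Rightarrow> cmatrix" where
  "adjm A k l = cnj (A l k)"

definition idm :: cmatrix where
  "idm k l = (if k = l then 1 else 0)"

definition unitary_matrix :: "cmatrix \<Rightarrow> bool" where
  "unitary_matrix W \<longleftrightarrow> bounded_matrix W \<and> mmult W (adjm W) = idm \<and> mmult (adjm W) W = idm"

definition Vop :: "real \<Rightarrow> cmatrix" where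
  "Vop x k l = (if k = l then exp (\<i> * of_real x * of_int k) else 0)"

definition iX :: "real set \<Rightarrow> int \<Rightarrow> int \<Rightarrow> complex" where
  "iX X k l = complex_of_real (1 / (2 * pi)) *
      (LINT x:X|lborel. exp (\<i> * of_int (k - l) * of_real x))"

definition EB :: "cmatrix \<Rightarrow> real set \<Rightarrow> cmatrix" where
  "EB B X k l = B k l * iX X k l"

text \<open>Moment operators E^B[j] = int_0^{2pi} x^j dE^B(x), weakly:
  <k|E^B[j]|l> = int x^j d<k|E^B(.)|l>(x), the complex measure having density
  B(k,l) e^{i(k-l)x}/(2 pi) on [0,2pi).\<close>
definition EBmoment :: "cmatrix \<Rightarrow> nat \<Rightarrow> cmatrix" where
  "EBmoment B j k l = B k l * complex_of_real (1 / (2 * pi)) *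
      (LINT x:{0..<2*pi}|lborel. (complex_of_real x) ^ j * exp (\<i> * of_int (k - l) * of_real x))"

definition noise_op :: "cmatrix \<Rightarrow> cmatrix" where
  "noise_op B k l = EBmoment B 2 k l - mmult (EBmoment B 1) (EBmoment B 1) k l"

definition sB :: "cmatrix \<Rightarrow> int \<Rightarrow> nat \<Rightarrow> real" where
  "sB B n l = (pi / sqrt 3) ^ l *
     (1 - 3 / pi\<^sup>2 * (\<Sum>\<^sub>\<infinity>k\<in>UNIV - {n}. (cmod (B n k)) ^ l / (real_of_int (k - n))\<^sup>2))"

definition psd_kernel :: "cmatrix \<Rightarrow> bool" where
  "psd_kernel B \<longleftrightarrow> (\<forall>F c. finite F \<longrightarrow>
     (let s = (\<Sum>k\<in>F. \<Sum>l\<in>F. cnj (c k) * B k l * c l) in Im s = 0 \<and> Re s \<ge> 0))"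

end

theory Submission
  imports Defs
begin

(* The matrix entries of the moment operators are explicit: <k|E^B[1]|l> is B(k,l) times pi
   (k = l) or -i/(k-l) (k /= l), and similarly for E^B[2].  On the diagonal the noise is
   pi^2/3 - sum_{m /= k} |B(k,m)|^2/(m-k)^2, and since sum_{m /= k} 1/(m-k)^2 = pi^2/3 with weights
   |B(k,m)|^2 <= 1, it vanishes iff all |B(k,m)| = 1; the same comparison settles s^B_n(l).
   A positive semidefinite kernel with unimodular entries and unit diagonal is multiplicative,
   B(k,m) B(m,l) = B(k,l), hence B(k,l) = w_k conj(w_l) with w_k = B(k,0).  This makes the
   off-diagonal noise vanish via sum_m 1/((k-m)(m-l)) = -2/(k-l)^2, and W = diag(w) is the
   required unitary.  Conversely, an operator commuting with every V_x is diagonal with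
   unimodular entries, so W E^1(X) W* = E^B(X) forces B(k,l) = w_k conj(w_l) on a set X
   with i_X(k,l) /= 0. *)

lemma set_integral_Ico_FTC:
  fixes f F :: "real \<Rightarrow> 'a::euclidean_space"
  assumes "a \<le> b" and "\<And>x. (F has_vector_derivative f x) (at x)" and "continuous_on UNIV f"
  shows "(LINT x:{a..<b}|lborel. f x) = F b - F a"
proof -
  have "f \<in> borel_measurable borel"
    using assms(3) by (rule borel_measurable_continuous_onI)
  moreover have "AE x in lborel. x \<in> {a..b} \<longleftrightarrow> x \<in> {a..<b}"
    using AE_lborel_singleton[of b] by eventually_elim auto
  ultimately have "(LINT x:{a..<b}|lborel. f x) = (LINT x:{a..b}|lborel. f x)"
    by (intro set_integral_cong_set) (auto simp: set_borel_measurable_def)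
  also have "\<dots> = F b - F a"
    unfolding set_lebesgue_integral_def
    by (rule integral_FTC_atLeastAtMost[OF assms(1)])
       (auto intro: has_vector_derivative_at_within assms(2) continuous_on_subset[OF assms(3)])
  finally show ?thesis .
qed

lemma set_integral_Ico_by_complex_antiderivative:
  fixes f F :: "complex \<Rightarrow> complex"
  assumes "0 \<le> a" and "\<And>z. (F has_field_derivative f z) (at z)" and "continuous_on UNIV f"
  shows "(LINT x:{0..<a}|lborel. f (of_real x)) = F (of_real a) - F 0"
proof -
  have "(LINT x:{0..<a}|lborel. f (of_real x)) = F (of_real a) - F (of_real 0)"
  proof (rule set_integral_Ico_FTC[OF assms(1)])
    show "((\<lambda>x. F (of_real x)) has_vector_derivative f (of_real x)) (at x)" for x
      using assms(2) by (rule has_vector_derivative_real_field)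
    show "continuous_on UNIV (\<lambda>x. f (of_real x))"
      by (intro continuous_on_compose2[OF assms(3)] continuous_intros) auto
  qed
  then show ?thesis by simp
qed

lemma set_integral_Ico_power:
  assumes "0 \<le> a"
  shows "(LINT x:{0..<a}|lborel. (complex_of_real x) ^ n) = of_real (a ^ Suc n / Suc n)"
proof -
  have "(LINT x:{0..<a}|lborel. (complex_of_real x) ^ n) =
      (\<lambda>z. z ^ Suc n / of_nat (Suc n)) (of_real a) - (\<lambda>z. z ^ Suc n / of_nat (Suc n)) 0"
  proof (rule set_integral_Ico_by_complex_antiderivative[OF assms])
    fix z :: complex
    have "(1 + of_nat n) * z ^ n / of_nat (Suc n) = z ^ n"
      by (metis of_nat_Suc of_nat_neq_0 add.commute nonzero_mult_div_cancel_left)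
    then show "((\<lambda>z. z ^ Suc n / of_nat (Suc n)) has_field_derivative z ^ n) (at z)"
      using DERIV_cdivide[OF DERIV_power_Suc[OF DERIV_ident, where x = z and s = UNIV and n = n],
        of "of_nat (Suc n)"]
      by simp
  qed (intro continuous_intros)
  then show ?thesis by simp
qed

lemma set_integral_Ico_exp:
  fixes c :: complex
  assumes "c \<noteq> 0" and "0 \<le> a"
  shows "(LINT x:{0..<a}|lborel. exp (\<i> * c * of_real x)) = (exp (\<i> * c * of_real a) - 1) / (\<i> * c)"
proof -
  have "(LINT x:{0..<a}|lborel. exp (\<i> * c * of_real x)) =
      (\<lambda>z. exp (\<i> * c * z) / (\<i> * c)) (of_real a) - (\<lambda>z. exp (\<i> * c * z) / (\<i> * c)) 0"
    by (rule set_integral_Ico_by_complex_antiderivative[OF assms(2), where f = "\<lambda>z. exp (\<i> * c * z)"])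
       (use assms(1) in \<open>auto intro!: derivative_eq_intros continuous_intros\<close>)
  then show ?thesis by (simp add: diff_divide_distrib)
qed

lemma set_integral_Ico_x_exp:
  fixes c :: complex
  assumes "c \<noteq> 0" and "0 \<le> a"
  shows "(LINT x:{0..<a}|lborel. of_real x * exp (\<i> * c * of_real x)) =
     exp (\<i> * c * of_real a) * (of_real a / (\<i> * c) + 1 / c^2) - 1 / c^2"
proof -
  have "(LINT x:{0..<a}|lborel. of_real x * exp (\<i> * c * of_real x)) =
      (\<lambda>z. exp (\<i> * c * z) * (z / (\<i> * c) + 1 / c^2)) (of_real a)
    - (\<lambda>z. exp (\<i> * c * z) * (z / (\<i> * c) + 1 / c^2)) 0"
  proof (rule set_integral_Ico_by_complex_antiderivative[OF assms(2), where f = "\<lambda>z. z * exp (\<i> * c * z)"])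
    show "((\<lambda>z. exp (\<i> * c * z) * (z / (\<i> * c) + 1 / c^2)) has_field_derivative z * exp (\<i> * c * z)) (at z)" for z
      using assms(1) by (auto intro!: derivative_eq_intros simp: field_simps power2_eq_square)
  qed (intro continuous_intros)
  then show ?thesis by simp
qed

lemma set_integral_Ico_x2_exp:
  fixes c :: complex
  assumes "c \<noteq> 0" and "0 \<le> a"
  shows "(LINT x:{0..<a}|lborel. (of_real x)^2 * exp (\<i> * c * of_real x)) =
     exp (\<i> * c * of_real a) * (- \<i> * (of_real a)^2 / c + 2 * of_real a / c^2 + 2 * \<i> / c^3) - 2 * \<i> / c^3"
proof -
  have "(LINT x:{0..<a}|lborel. (of_real x)^2 * exp (\<i> * c * of_real x)) =
      (\<lambda>z. exp (\<i> * c * z) * (- \<i> * z^2 / c + 2 * z / c^2 + 2 * \<i> / c^3)) (of_real a)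
    - (\<lambda>z. exp (\<i> * c * z) * (- \<i> * z^2 / c + 2 * z / c^2 + 2 * \<i> / c^3)) 0"
  proof (rule set_integral_Ico_by_complex_antiderivative[OF assms(2), where f = "\<lambda>z. z^2 * exp (\<i> * c * z)"])
    show "((\<lambda>z. exp (\<i> * c * z) * (- \<i> * z^2 / c + 2 * z / c^2 + 2 * \<i> / c^3))
        has_field_derivative z^2 * exp (\<i> * c * z)) (at z)" for z
      using assms(1) by (auto intro!: derivative_eq_intros
          simp: field_simps power2_eq_square power3_eq_cube eval_nat_numeral)
  qed (intro continuous_intros)
  then show ?thesis by simp
qed

lemma exp_int_2pi: "exp (\<i> * of_int d * of_real (2 * pi)) = 1"
  using exp_integer_2pi[of "of_int d"] by (simp add: algebra_simps)

lemma EBmoment_1: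
  "EBmoment B 1 k l = B k l * (if k = l then of_real pi else - \<i> / of_int (k - l))"
proof (cases "k = l")
  case True
  then show ?thesis
    unfolding EBmoment_def using set_integral_Ico_power[of "2 * pi" 1] by (simp add: power2_eq_square)
next
  case False
  define c where "c = complex_of_int (k - l)"
  have c: "c \<noteq> 0" using False by (simp add: c_def)
  have exp_c_2pi: "exp (\<i> * c * of_real (2 * pi)) = 1"
    unfolding c_def by (rule exp_int_2pi)
  have two_pi_ge_0: "0 \<le> 2 * pi"
    by simp
  have "EBmoment B 1 k l = B k l * of_real (1 / (2 * pi)) *
      (LINT x:{0..<2*pi}|lborel. of_real x * exp (\<i> * c * of_real x))"
    unfolding EBmoment_def c_def by simp
  also have "\<dots> = B k l * (- \<i> / c)"
    unfolding set_integral_Ico_x_exp[OF c two_pi_ge_0] exp_c_2pi using c by (simp add: field_simps)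
  finally show ?thesis using False by (simp add: c_def)
qed

lemma EBmoment_2:
  "EBmoment B 2 k l = B k l * (if k = l then of_real (4 * pi^2 / 3)
     else - 2 * of_real pi * \<i> / of_int (k - l) + 2 / (of_int (k - l))^2)"
proof (cases "k = l")
  case True
  then show ?thesis
    unfolding EBmoment_def using set_integral_Ico_power[of "2 * pi" 2]
    by (simp add: field_simps power2_eq_square power3_eq_cube)
next
  case False
  define c where "c = complex_of_int (k - l)"
  have c: "c \<noteq> 0" using False by (simp add: c_def)
  have exp_c_2pi: "exp (\<i> * c * of_real (2 * pi)) = 1"
    unfolding c_def by (rule exp_int_2pi)
  have two_pi_ge_0: "0 \<le> 2 * pi"
    by simp
  have "EBmoment B 2 k l = B k l * of_real (1 / (2 * pi)) *
      (LINT x:{0..<2*pi}|lborel. (of_real x)^2 * exp (\<i> * c * of_real x))"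
    unfolding EBmoment_def c_def by simp
  also have "\<dots> = B k l * (- 2 * of_real pi * \<i> / c + 2 / c^2)"
    unfolding set_integral_Ico_x2_exp[OF c two_pi_ge_0] exp_c_2pi using c
    by (simp add: field_simps power2_eq_square)
  finally show ?thesis using False by (simp add: c_def)
qed

lemma has_sum_diff:
  fixes f g :: "'a \<Rightarrow> 'b::topological_ab_group_add"
  assumes "(f has_sum a) A" and "(g has_sum b) A"
  shows "((\<lambda>x. f x - g x) has_sum (a - b)) A"
  using has_sum_add[OF assms(1) has_sum_uminus[THEN iffD2, of g A "- b"]] assms(2) by simp

lemma has_sum_int_shift:
  fixes f :: "int \<Rightarrow> 'a::topological_comm_monoid_add"
  assumes "(f has_sum a) UNIV"
  shows "((\<lambda>j. f (j + t)) has_sum a) UNIV"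
proof -
  have "bij_betw (\<lambda>j. j + t) UNIV UNIV"
    by (rule bij_betwI[where g = "\<lambda>j. j - t"]) auto
  then show ?thesis
    using has_sum_reindex_bij_betw assms by blast
qed

lemma has_sum_int_from_nat_halves:
  fixes f :: "int \<Rightarrow> 'a::topological_comm_monoid_add"
  assumes "((\<lambda>n. f (int n + 1)) has_sum a) UNIV" and "((\<lambda>n. f (- int n)) has_sum b) UNIV"
  shows "(f has_sum (a + b)) UNIV"
proof -
  have pos: "(f has_sum a) (range (\<lambda>n. int n + 1))"
    using assms(1) by (subst has_sum_reindex) (auto simp: inj_on_def o_def)
  have nonpos: "(f has_sum b) (range (\<lambda>n. - int n))"
    using assms(2) by (subst has_sum_reindex) (auto simp: inj_on_def o_def)
  have "range (\<lambda>n. int n + 1) \<union> range (\<lambda>n. - int n) = UNIV"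
  proof -
    have "j \<in> range (\<lambda>n. int n + 1) \<or> j \<in> range (\<lambda>n. - int n)" for j :: int
    proof (cases "j > 0")
      case True
      then have "j = int (nat (j - 1)) + 1" by simp
      then show ?thesis by blast
    next
      case False
      then have "j = - int (nat (- j))" by simp
      then show ?thesis by blast
    qed
    then show ?thesis by blast
  qed
  moreover have "range (\<lambda>n. int n + 1) \<inter> range (\<lambda>n. - int n) = {}"
    by auto
  ultimately show ?thesis
    using has_sum_Un_disjoint[OF pos nonpos] by simp
qed

lemma has_sum_telescope_inverse_nat: "((\<lambda>n::nat. 1 / real n - 1 / real (Suc n)) has_sum 0) UNIV"
proof (rule sums_nonneg_imp_has_sum_strong)
  show "(\<lambda>n. 1 / real n - 1 / real (Suc n)) sums 0"
    using telescope_sums'[OF lim_1_over_n] by simp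
  show "eventually (\<lambda>n. 0 \<le> 1 / real n - 1 / real (Suc n)) sequentially"
    using eventually_ge_at_top[of 1] by eventually_elim (simp add: frac_le)
qed

text \<open>With the junk value \<open>1 / 0 = 0\<close> the series telescopes to \<open>0\<close> on both halves of \<open>\<int>\<close>.\<close>

lemma has_sum_inverse_int_diff_1: "((\<lambda>j. 1 / real_of_int j - 1 / real_of_int (j - 1)) has_sum 0) UNIV"
proof -
  have tel: "((\<lambda>n. 1 / real (Suc n) - 1 / real n) has_sum 0) UNIV"
    using has_sum_uminusI[OF has_sum_telescope_inverse_nat] by simp
  have halves_eq:
    "1 / real_of_int (int n + 1) - 1 / real_of_int (int n + 1 - 1) = 1 / real (Suc n) - 1 / real n"
    "1 / real_of_int (- int n) - 1 / real_of_int (- int n - 1) = 1 / real (Suc n) - 1 / real n" for n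
    by (simp_all add: add.commute divide_simps)
  have "((\<lambda>n. 1 / real_of_int (int n + 1) - 1 / real_of_int (int n + 1 - 1)) has_sum 0) UNIV"
    and "((\<lambda>n. 1 / real_of_int (- int n) - 1 / real_of_int (- int n - 1)) has_sum 0) UNIV"
    unfolding halves_eq by (fact tel)+
  from has_sum_int_from_nat_halves[OF this] show ?thesis
    by simp
qed

lemma has_sum_inverse_int_diff: "((\<lambda>j. 1 / real_of_int j - 1 / real_of_int (j - d)) has_sum 0) UNIV"
proof -
  have nat_case: "((\<lambda>j. 1 / real_of_int j - 1 / real_of_int (j - int e)) has_sum 0) UNIV" for e
  proof (induction e)
    case (Suc e)
    have "((\<lambda>j. (1 / real_of_int j - 1 / real_of_int (j - int e))
        + (1 / real_of_int (j - int e) - 1 / real_of_int (j - int e - 1))) has_sum (0 + 0)) UNIV"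
      using has_sum_add[OF Suc.IH has_sum_int_shift[OF has_sum_inverse_int_diff_1, of "- int e"]]
      by simp
    then show ?case by (simp add: algebra_simps)
  qed simp
  show ?thesis
  proof (cases "d \<ge> 0")
    case True
    then show ?thesis using nat_case[of "nat d"] by simp
  next
    case False
    have "((\<lambda>j. 1 / real_of_int (j - d) - 1 / real_of_int (j - d - int (nat (- d)))) has_sum 0) UNIV"
      using has_sum_int_shift[OF nat_case[of "nat (- d)"], of "- d"] by simp
    then have "((\<lambda>j. - (1 / real_of_int (j - d) - 1 / real_of_int j)) has_sum - 0) UNIV"
      using False by (intro has_sum_uminusI) simp
    then show ?thesis by simp
  qed
qed

lemma has_sum_inverse_int_products:
  fixes k l :: int
  assumes "k \<noteq> l"
  shows "((\<lambda>m. 1 / (real_of_int (k - m) * real_of_int (m - l))) has_sum - 2 / (real_of_int (k - l))^2) UNIV"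
proof -
  define d where "d = k - l"
  have d: "real_of_int d \<noteq> 0" using assms by (simp add: d_def)
  define spikes where "spikes j = (if j = 0 \<or> j = d then 1 / (real_of_int d)^2 else 0)" for j
  have "(spikes has_sum 2 / (real_of_int d)^2) UNIV"
    by (rule has_sum_finite_neutralI[of "{0, d}"]) (use d in \<open>auto simp: spikes_def\<close>)
  from has_sum_diff[OF has_sum_divide_const[OF has_sum_inverse_int_diff, of d "real_of_int d"] this]
  have "((\<lambda>j. (1 / real_of_int j - 1 / real_of_int (j - d)) / d - spikes j) has_sum - 2 / (real_of_int d)^2) UNIV"
    by simp
  moreover have "(1 / real_of_int j - 1 / real_of_int (j - d)) / d - spikes j
      = 1 / (real_of_int (d - j) * real_of_int j)" for j
    \<comment> \<open>partial fractions, the spikes correcting the junk values at \<open>j = 0\<close> and \<open>j = d\<close>\<close>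
    using d by (cases "j = 0 \<or> j = d") (auto simp: spikes_def field_simps power2_eq_square)
  ultimately have "((\<lambda>j. 1 / (real_of_int (d - j) * real_of_int j)) has_sum - 2 / (real_of_int d)^2) UNIV"
    by simp
  from has_sum_int_shift[OF this, of "- l"] show ?thesis
    by (simp add: d_def algebra_simps)
qed

lemma has_sum_inverse_squares_int: "((\<lambda>k. 1 / (real_of_int (k - n))^2) has_sum pi^2 / 3) (UNIV - {n})"
proof -
  have pos: "((\<lambda>m. 1 / (real_of_int (int m + 1))^2) has_sum pi^2 / 6) UNIV"
    using sums_nonneg_imp_has_sum[OF inverse_squares_sums] by (simp add: add.commute)
  have "(\<lambda>m. 1 / (real m)^2) sums (pi^2 / 6)"
    using sums_Suc_iff[of "\<lambda>m. 1 / (real m)^2"] inverse_squares_sums by simp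
  then have nonpos: "((\<lambda>m. 1 / (real_of_int (- int m))^2) has_sum pi^2 / 6) UNIV"
    using sums_nonneg_imp_has_sum by fastforce
  have "((\<lambda>j. 1 / (real_of_int j)^2) has_sum pi^2 / 3) UNIV"
    using has_sum_int_from_nat_halves[OF pos nonpos] by simp
  from has_sum_int_shift[OF this, of "- n"]
  have "((\<lambda>k. 1 / (real_of_int (k - n))^2) has_sum pi^2 / 3) UNIV"
    by simp
  then show ?thesis
    by (rule has_sum_cong_neutral[THEN iffD1, rotated -1]) auto
qed

lemma psd_kernelD:
  assumes "psd_kernel B" and "finite F"
  shows "Im (\<Sum>k\<in>F. \<Sum>l\<in>F. cnj (c k) * B k l * c l) = 0"
    and "Re (\<Sum>k\<in>F. \<Sum>l\<in>F. cnj (c k) * B k l * c l) \<ge> 0"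
  using assms unfolding psd_kernel_def Let_def by auto

lemma psd_kernel_hermitian:
  assumes psd: "psd_kernel B"
  shows "B l k = cnj (B k l)"
proof -
  have real_diag: "Im (B j j) = 0" for j
    using psd_kernelD(1)[OF psd, of "{j}" "\<lambda>_. 1"] by simp
  show ?thesis
  proof (cases "k = l")
    case True
    then show ?thesis using real_diag by (simp add: complex_eq_iff)
  next
    case False
    have "Im (B k l + B l k) = 0"
      using psd_kernelD(1)[OF psd, of "{k, l}" "\<lambda>_. 1"] False real_diag by simp
    moreover have "Re (B k l) - Re (B l k) = 0"
      using psd_kernelD(1)[OF psd, of "{k, l}" "\<lambda>j. if j = k then 1 else \<i>"] False real_diag by simp
    ultimately show ?thesis by (simp add: complex_eq_iff)
  qed
qed

lemma psd_kernel_unimodular_mult: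
  assumes psd: "psd_kernel B" and diag: "\<forall>k. B k k = 1" and unimodular: "\<forall>k l. cmod (B k l) = 1"
  shows "B k m * B m l = B k l"
proof -
  have herm: "B y x = cnj (B x y)" for x y
    using psd by (rule psd_kernel_hermitian)
  have unit: "B x y * cnj (B x y) = 1" for x y
    using unimodular by (metis complex_norm_square of_real_1 power_one)
  consider "m = k" | "m = l" | "k = l" | "m \<noteq> k" "m \<noteq> l" "k \<noteq> l"
    by blast
  then show ?thesis
  proof cases
    case 3
    then show ?thesis using diag herm[of k m] unit[of k m] by simp
  next
    case 4
    define a b c where "a = B k m" and "b = B k l" and "c = B m l"
    define z where "z = cnj a * b - c"
    define v where "v x = (if x = k then a else if x = m then -1 else - cnj z)" for x
    have "(\<Sum>x\<in>{k,m,l}. \<Sum>y\<in>{k,m,l}. cnj (v x) * B x y * v y) = (1 - a * cnj a) - z * cnj z"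
      \<comment> \<open>the vector \<open>v\<close> is chosen so that the form collapses to \<open>- |z|\<^sup>2\<close>\<close>
      using 4 by (simp add: v_def z_def a_def b_def c_def diag herm[of k m] herm[of k l] herm[of m l]
          algebra_simps)
    then have "Re (- (z * cnj z)) \<ge> 0"
      using psd_kernelD(2)[OF psd, of "{k,m,l}" v] unit[of k m] by (simp add: a_def)
    then have "z = 0"
      by (simp flip: complex_norm_square)
    then have "a * c = a * cnj a * b"
      by (simp add: z_def algebra_simps)
    then show ?thesis
      using unit[of k m] by (simp add: a_def b_def c_def)
  qed (use diag in simp_all)
qed

definition diag_matrix :: "(int \<Rightarrow> complex) \<Rightarrow> cmatrix" where
  "diag_matrix a k l = (if k = l then a k else 0)"

lemma mmult_diag_matrix_left: "mmult (diag_matrix a) M k l = a k * M k l"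
  unfolding mmult_def
  by (rule infsumI, rule has_sum_finite_neutralI[of "{k}"]) (auto simp: diag_matrix_def)

lemma mmult_diag_matrix_right: "mmult M (diag_matrix a) k l = M k l * a l"
  unfolding mmult_def
  by (rule infsumI, rule has_sum_finite_neutralI[of "{l}"]) (auto simp: diag_matrix_def)

lemma adjm_diag_matrix: "adjm (diag_matrix a) = diag_matrix (\<lambda>k. cnj (a k))"
  by (auto simp: adjm_def diag_matrix_def fun_eq_iff)

lemma Vop_eq_diag_matrix: "Vop x = diag_matrix (\<lambda>k. cis (x * of_int k))"
  by (auto simp: Vop_def diag_matrix_def fun_eq_iff cis_conv_exp mult.assoc)

lemma bounded_matrix_diag_matrix:
  assumes "\<And>k. cmod (a k) \<le> 1"
  shows "bounded_matrix (diag_matrix a)"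
  unfolding bounded_matrix_def
proof (intro exI[of _ 1] allI impI)
  fix F :: "int set" and f g :: "int \<Rightarrow> complex"
  assume "finite F"
  then have "(\<Sum>k\<in>F. \<Sum>l\<in>F. cnj (f k) * diag_matrix a k l * g l) = (\<Sum>k\<in>F. cnj (f k) * a k * g k)"
    by (simp add: diag_matrix_def if_distrib if_distribR sum.delta cong: if_cong)
  also have "cmod \<dots> \<le> (\<Sum>k\<in>F. cmod (f k) * cmod (g k))"
  proof (rule order_trans[OF norm_sum sum_mono])
    fix k
    show "cmod (cnj (f k) * a k * g k) \<le> cmod (f k) * cmod (g k)"
      using mult_left_mono[OF assms, of "cmod (f k) * cmod (g k)" k] by (simp add: norm_mult mult_ac)
  qed
  also have "\<dots> \<le> L2_set (\<lambda>k. cmod (f k)) F * L2_set (\<lambda>k. cmod (g k)) F"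
    using L2_set_mult_ineq[of "\<lambda>k. cmod (f k)" "\<lambda>k. cmod (g k)" F] by simp
  finally show "cmod (\<Sum>k\<in>F. \<Sum>l\<in>F. cnj (f k) * diag_matrix a k l * g l)
      \<le> 1 * sqrt (\<Sum>k\<in>F. (cmod (f k))\<^sup>2) * sqrt (\<Sum>l\<in>F. (cmod (g l))\<^sup>2)"
    by (simp add: L2_set_def)
qed

lemma unitary_matrix_diag_matrix:
  assumes "\<And>k. cmod (a k) = 1"
  shows "unitary_matrix (diag_matrix a)"
proof -
  have "a k * cnj (a k) = 1" for k
    using assms by (metis complex_norm_square of_real_1 power_one)
  then show ?thesis
    unfolding unitary_matrix_def
    using assms by (auto intro!: bounded_matrix_diag_matrix
        simp: fun_eq_iff mmult_diag_matrix_left adjm_diag_matrix diag_matrix_def idm_def mult.commute)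
qed

lemma Vop_conj_invariant_row_sum:
  assumes "mmult (mmult W (Vop x)) (adjm W) = Vop x"
  shows "((\<lambda>m. (cmod (W k m))^2 * cos (x * of_int (m - k))) has_sum 1) UNIV"
proof -
  have "mmult (mmult W (Vop x)) (adjm W) k k = (\<Sum>\<^sub>\<infinity>m. W k m * cnj (W k m) * cis (x * of_int m))"
    unfolding mmult_def[of _ "adjm W"] adjm_def Vop_eq_diag_matrix mmult_diag_matrix_right
    by (simp add: mult_ac)
  also have "\<dots> = (\<Sum>\<^sub>\<infinity>m. of_real ((cmod (W k m))^2) * cis (x * of_int m))"
    unfolding complex_norm_square ..
  finally have "mmult (mmult W (Vop x)) (adjm W) k k = (\<Sum>\<^sub>\<infinity>m. of_real ((cmod (W k m))^2) * cis (x * of_int m))" .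
  then have sum: "(\<Sum>\<^sub>\<infinity>m. of_real ((cmod (W k m))^2) * cis (x * of_int m)) = cis (x * of_int k)"
    using assms by (simp add: Vop_eq_diag_matrix diag_matrix_def)
  then have "(\<lambda>m. of_real ((cmod (W k m))^2) * cis (x * of_int m)) summable_on UNIV"
    using infsum_not_exists by fastforce
  with sum have "((\<lambda>m. of_real ((cmod (W k m))^2) * cis (x * of_int m)) has_sum cis (x * of_int k)) UNIV"
    using has_sum_infsum by fastforce
  from has_sum_Re[OF has_sum_cmult_right[OF this, of "cis (- (x * of_int k))"]]
  show ?thesis
    by (simp add: cis_mult cos_diff algebra_simps)
qed

lemma Vop_conj_invariant_imp_diagonal:
  assumes "\<forall>x. mmult (mmult W (Vop x)) (adjm W) = Vop x"
  shows "W = diag_matrix (\<lambda>k. W k k)" and "cmod (W k k) = 1"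
proof -
  have row_sum: "((\<lambda>m. (cmod (W k m))^2 * cos (x * of_int (m - k))) has_sum 1) UNIV" for k x
    using assms by (intro Vop_conj_invariant_row_sum) simp
  have off_diag: "W k m = 0" if "m \<noteq> k" for k m
  proof -
    define x where "x = pi / real_of_int (m - k)"
    have "((\<lambda>j. (cmod (W k j))^2 - (cmod (W k j))^2 * cos (x * of_int (j - k))) has_sum 1 - 1) UNIV"
      using has_sum_diff[OF row_sum[of k 0] row_sum[of k x]] by simp
    moreover have "0 \<le> (cmod (W k j))^2 - (cmod (W k j))^2 * cos (x * of_int (j - k))" for j
      using mult_left_mono[OF cos_le_one, of "(cmod (W k j))^2"] by simp
    ultimately have "(cmod (W k m))^2 - (cmod (W k m))^2 * cos (x * of_int (m - k)) = 0"
      by (intro nonneg_has_sum_le_0D) auto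
    moreover have "cos (x * of_int (m - k)) = -1"
      \<comment> \<open>\<open>x\<close> is chosen so that the phase of the \<open>m\<close>-th term is \<open>\<pi>\<close>\<close>
      using that by (simp add: x_def)
    ultimately show ?thesis by simp
  qed
  then show "W = diag_matrix (\<lambda>k. W k k)"
    by (auto simp: fun_eq_iff diag_matrix_def)
  have "((\<lambda>m. (cmod (W k m))^2) has_sum (cmod (W k k))^2) UNIV"
    by (rule has_sum_finite_neutralI[of "{k}"]) (auto simp: off_diag)
  then have "(cmod (W k k))^2 = 1"
    using row_sum[of k 0] has_sum_unique by fastforce
  then show "cmod (W k k) = 1"
    using norm_ge_zero[of "W k k"] by (auto simp: power2_eq_1_iff)
qed

lemma iX_half_period_neq_0:
  fixes k l :: int
  assumes "k \<noteq> l"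
  shows "iX {0..<pi / \<bar>real_of_int (k - l)\<bar>} k l \<noteq> 0"
proof -
  define d where "d = real_of_int (k - l)"
  define c where "c = complex_of_int (k - l)"
  have d: "d \<noteq> 0" and c: "c \<noteq> 0" using assms by (simp_all add: c_def d_def)
  have "\<i> * c * of_real (pi / \<bar>d\<bar>) = of_real (sgn d * pi) * \<i>"
    by (simp add: c_def d_def real_sgn_eq)
  moreover have "cis (sgn d * pi) = -1"
    using d by (cases "d > 0") (simp_all add: sgn_if complex_eq_iff)
  ultimately have "exp (\<i> * c * of_real (pi / \<bar>d\<bar>)) = -1"
    by (simp add: cis_conv_exp mult.commute)
  then have "iX {0..<pi / \<bar>d\<bar>} k l = of_real (1 / (2 * pi)) * (- 2 / (\<i> * c))"
    unfolding iX_def c_def[symmetric] set_integral_Ico_exp[OF c divide_nonneg_nonneg[OF pi_ge_zero abs_ge_zero]]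
    by simp
  then show ?thesis
    using c by (simp add: d_def)
qed

lemma summable_on_weighted_inverse_squares:
  fixes w :: "int \<Rightarrow> real"
  assumes "\<And>m. 0 \<le> w m" and "\<And>m. w m \<le> 1"
  shows "(\<lambda>m. w m / (real_of_int (m - k))^2) summable_on (UNIV - {k})"
proof (rule summable_on_comparison_test)
  show "(\<lambda>m. 1 / (real_of_int (m - k))^2) summable_on (UNIV - {k})"
    using has_sum_inverse_squares_int by (rule has_sum_imp_summable)
  show "w m / (real_of_int (m - k))^2 \<le> 1 / (real_of_int (m - k))^2" for m
    using assms(2)[of m] by (simp add: divide_right_mono)
  show "0 \<le> w m / (real_of_int (m - k))^2" for m
    using assms(1)[of m] by simp
qed

lemma weighted_inverse_squares_eq_iff:
  fixes w :: "int \<Rightarrow> real"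
  assumes w_ge_0: "\<And>m. 0 \<le> w m" and w_le_1: "\<And>m. w m \<le> 1"
  shows "(\<Sum>\<^sub>\<infinity>m\<in>UNIV - {k}. w m / (real_of_int (m - k))^2) = pi^2 / 3
    \<longleftrightarrow> (\<forall>m. m \<noteq> k \<longrightarrow> w m = 1)"
proof
  assume sum: "(\<Sum>\<^sub>\<infinity>m\<in>UNIV - {k}. w m / (real_of_int (m - k))^2) = pi^2 / 3"
  have "((\<lambda>m. w m / (real_of_int (m - k))^2) has_sum pi^2 / 3) (UNIV - {k})"
    using has_sum_infsum[OF summable_on_weighted_inverse_squares[of w k, OF w_ge_0 w_le_1]] unfolding sum .
  from has_sum_diff[OF has_sum_inverse_squares_int this]
  have "((\<lambda>m. (1 - w m) / (real_of_int (m - k))^2) has_sum 0) (UNIV - {k})"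
    by (simp add: diff_divide_distrib)
  then have "(1 - w m) / (real_of_int (m - k))^2 = 0" if "m \<noteq> k" for m
    using that w_le_1 by (intro nonneg_has_sum_le_0D) auto
  then show "\<forall>m. m \<noteq> k \<longrightarrow> w m = 1"
    by simp
next
  assume "\<forall>m. m \<noteq> k \<longrightarrow> w m = 1"
  then have "(\<Sum>\<^sub>\<infinity>m\<in>UNIV - {k}. w m / (real_of_int (m - k))^2)
      = (\<Sum>\<^sub>\<infinity>m\<in>UNIV - {k}. 1 / (real_of_int (m - k))^2)"
    by (intro infsum_cong) simp
  then show "(\<Sum>\<^sub>\<infinity>m\<in>UNIV - {k}. w m / (real_of_int (m - k))^2) = pi^2 / 3"
    using infsumI[OF has_sum_inverse_squares_int] by simp
qed

lemma sB_eq_0_iff: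
  "sB B n l = 0 \<longleftrightarrow> (\<Sum>\<^sub>\<infinity>k\<in>UNIV - {n}. cmod (B n k) ^ l / (real_of_int (k - n))^2) = pi^2 / 3"
proof -
  define S where "S = (\<Sum>\<^sub>\<infinity>k\<in>UNIV - {n}. cmod (B n k) ^ l / (real_of_int (k - n))^2)"
  have "sB B n l = 0 \<longleftrightarrow> 1 - 3 / pi^2 * S = 0"
    by (simp add: sB_def S_def)
  also have "\<dots> \<longleftrightarrow> S = pi^2 / 3"
    by (auto simp: field_simps)
  finally show ?thesis
    unfolding S_def .
qed

lemma sB_eq_0_iff_unimodular:
  assumes disc: "\<forall>k l. cmod (B k l) \<le> 1" and diag: "\<forall>k. B k k = 1"
  shows "(\<forall>n l. sB B n l = 0) \<longleftrightarrow> (\<forall>k l. cmod (B k l) = 1)"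
proof
  assume "\<forall>n l. sB B n l = 0"
  then have "(\<Sum>\<^sub>\<infinity>k\<in>UNIV - {n}. cmod (B n k) / (real_of_int (k - n))^2) = pi^2 / 3" for n
    using sB_eq_0_iff[of B n 1] by simp
  then have "cmod (B n k) = 1" if "k \<noteq> n" for n k
    using weighted_inverse_squares_eq_iff[of "\<lambda>k. cmod (B n k)" n] disc that by simp
  then show "\<forall>k l. cmod (B k l) = 1"
    using diag by (metis norm_one)
next
  assume unimodular: "\<forall>k l. cmod (B k l) = 1"
  show "\<forall>n l. sB B n l = 0"
    using weighted_inverse_squares_eq_iff[of "\<lambda>k. cmod (B _ k) ^ _"] unimodular
    by (simp add: sB_eq_0_iff)
qed

lemma noise_op_diag:
  assumes disc: "\<forall>k l. cmod (B k l) \<le> 1" and psd: "psd_kernel B" and diag: "\<forall>k. B k k = 1"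
  shows "noise_op B k k = of_real (pi^2 / 3 - (\<Sum>\<^sub>\<infinity>m\<in>UNIV - {k}. (cmod (B k m))^2 / (real_of_int (m - k))^2))"
proof -
  define q where "q m = (cmod (B k m))^2 / (real_of_int (m - k))^2" for m
  define Q where "Q = (\<Sum>\<^sub>\<infinity>m\<in>UNIV - {k}. q m)"
  have "(q has_sum Q) (UNIV - {k})"
    unfolding Q_def q_def using disc
    by (intro has_sum_infsum summable_on_weighted_inverse_squares) (auto intro: power_le_one)
  then have "(q has_sum Q) UNIV"
    by (rule has_sum_cong_neutral[THEN iffD1, rotated -1]) (auto simp: q_def)
  moreover have "((\<lambda>m. if m = k then complex_of_real (pi^2) else 0) has_sum of_real (pi^2)) UNIV"
    by (rule has_sum_finite_neutralI[of "{k}"]) auto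
  ultimately have "((\<lambda>m. complex_of_real (q m) + (if m = k then of_real (pi^2) else 0))
      has_sum (of_real Q + of_real (pi^2))) UNIV"
    by (intro has_sum_add has_sum_of_real)
  moreover have "EBmoment B 1 k m * EBmoment B 1 m k = of_real (q m) + (if m = k then of_real (pi^2) else 0)" for m
  proof (cases "m = k")
    case False
    define x where "x = complex_of_int (m - k)"
    have "x \<noteq> 0"
      using False by (simp add: x_def)
    have "EBmoment B 1 k m * EBmoment B 1 m k = B k m * (- \<i> / - x) * (cnj (B k m) * (- \<i> / x))"
      unfolding EBmoment_1 psd_kernel_hermitian[OF psd, of k m] using False by (simp add: x_def)
    also have "\<dots> = B k m * cnj (B k m) / x^2"
      using \<open>x \<noteq> 0\<close> by (simp add: field_simps power2_eq_square)
    finally have "EBmoment B 1 k m * EBmoment B 1 m k = B k m * cnj (B k m) / x^2" .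
    then show ?thesis
      using False by (simp add: q_def x_def flip: complex_norm_square)
  next
    case True
    then show ?thesis
      unfolding EBmoment_1 using diag by (simp add: q_def power2_eq_square)
  qed
  ultimately have "mmult (EBmoment B 1) (EBmoment B 1) k k = of_real Q + of_real (pi^2)"
    unfolding mmult_def by (simp add: infsumI)
  then show ?thesis
    unfolding noise_op_def EBmoment_2 Q_def q_def using diag by simp
qed

lemma noise_op_off_diag:
  assumes diag: "\<forall>k. B k k = 1" and mult: "\<forall>k m l. B k m * B m l = B k l" and "k \<noteq> l"
  shows "noise_op B k l = 0"
proof -
  define c where "c = complex_of_int (k - l)"
  have c: "c \<noteq> 0" using \<open>k \<noteq> l\<close> by (simp add: c_def)
  define g where "g m = (if m = k \<or> m = l then - \<i> * of_real pi / c else 0)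
      - complex_of_real (1 / (real_of_int (k - m) * real_of_int (m - l)))" for m
  have "((\<lambda>m. if m = k \<or> m = l then - \<i> * of_real pi / c else 0) has_sum - 2 * \<i> * of_real pi / c) UNIV"
    by (rule has_sum_finite_neutralI[of "{k, l}"]) (use \<open>k \<noteq> l\<close> in auto)
  from has_sum_diff[OF this has_sum_of_real[OF has_sum_inverse_int_products[OF \<open>k \<noteq> l\<close>]]]
  have "(g has_sum - 2 * of_real pi * \<i> / c + 2 / c^2) UNIV"
    unfolding g_def by (simp add: c_def ac_simps)
  moreover have "EBmoment B 1 k m * EBmoment B 1 m l = B k l * g m" for m
  proof -
    consider "m = k" | "m = l" | "m \<noteq> k" "m \<noteq> l" by blast
    then show ?thesis
    proof cases
      case 3
      have ii: "(- \<i> / a) * (- \<i> / b) = - (1 / (a * b))" for a b :: complex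
        by (simp add: field_simps flip: power2_eq_square)
      have "k \<noteq> m" "m \<noteq> l"
        using 3 by auto
      then have "EBmoment B 1 k m * EBmoment B 1 m l
          = (B k m * B m l) * ((- \<i> / of_int (k - m)) * (- \<i> / of_int (m - l)))"
        unfolding EBmoment_1 by (simp only: if_False mult_ac)
      also have "\<dots> = B k l * - (1 / (of_int (k - m) * of_int (m - l)))"
        unfolding ii mult[rule_format] ..
      finally show ?thesis
        using 3 by (simp add: g_def)
    qed (unfold EBmoment_1, use \<open>k \<noteq> l\<close> diag in \<open>auto simp: g_def c_def\<close>)
  qed
  ultimately have "mmult (EBmoment B 1) (EBmoment B 1) k l = B k l * (- 2 * of_real pi * \<i> / c + 2 / c^2)"
    unfolding mmult_def by (simp add: infsumI has_sum_cmult_right)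
  then show ?thesis
    using \<open>k \<noteq> l\<close> by (simp add: noise_op_def EBmoment_2 c_def)
qed

lemma noise_op_eq_0_iff_unimodular:
  assumes disc: "\<forall>k l. cmod (B k l) \<le> 1" and psd: "psd_kernel B" and diag: "\<forall>k. B k k = 1"
  shows "noise_op B = (\<lambda>k l. 0) \<longleftrightarrow> (\<forall>k l. cmod (B k l) = 1)"
proof
  assume "noise_op B = (\<lambda>k l. 0)"
  then have "of_real (pi^2 / 3 - (\<Sum>\<^sub>\<infinity>m\<in>UNIV - {k}. (cmod (B k m))^2 / (real_of_int (m - k))^2)) = (0 :: complex)"
    for k
    unfolding noise_op_diag[OF assms, symmetric] by simp
  then have "pi^2 / 3 - (\<Sum>\<^sub>\<infinity>m\<in>UNIV - {k}. (cmod (B k m))^2 / (real_of_int (m - k))^2) = 0" for k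
    by (simp only: of_real_eq_0_iff)
  then have "(\<Sum>\<^sub>\<infinity>m\<in>UNIV - {k}. (cmod (B k m))^2 / (real_of_int (m - k))^2) = pi^2 / 3" for k
    by (simp add: algebra_simps)
  then have "\<forall>m. m \<noteq> k \<longrightarrow> (cmod (B k m))^2 = 1" for k
    by (subst (asm) weighted_inverse_squares_eq_iff) (use disc in \<open>auto intro: power_le_one\<close>)
  then have "cmod (B k m) = 1" if "m \<noteq> k" for k m
    using that by (simp add: abs_square_eq_1)
  then show "\<forall>k l. cmod (B k l) = 1"
    using diag by (metis norm_one)
next
  assume unimodular: "\<forall>k l. cmod (B k l) = 1"
  have sum: "(\<Sum>\<^sub>\<infinity>m\<in>UNIV - {k}. (cmod (B k m))^2 / (real_of_int (m - k))^2) = pi^2 / 3" for k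
    by (subst weighted_inverse_squares_eq_iff) (use unimodular in auto)
  have on_diag: "noise_op B k k = 0" for k
    unfolding noise_op_diag[OF assms] sum by simp
  have off_diag: "noise_op B k l = 0" if "k \<noteq> l" for k l
    using psd_kernel_unimodular_mult[OF psd diag unimodular] that by (intro noise_op_off_diag[of B]) (auto simp: diag)
  show "noise_op B = (\<lambda>k l. 0)"
  proof (intro ext)
    show "noise_op B k l = 0" for k l
      using on_diag off_diag by (cases "k = l") auto
  qed
qed

lemma psd_kernel_unimodular_factor:
  assumes psd: "psd_kernel B" and diag: "\<forall>k. B k k = 1" and unimodular: "\<forall>k l. cmod (B k l) = 1"
  shows "B k l = B k 0 * cnj (B l 0)"
  using psd_kernel_unimodular_mult[OF assms, of k 0 l] psd_kernel_hermitian[OF psd, of l 0] by simp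

lemma diag_matrix_conj_Vop:
  assumes "\<And>k. cmod (w k) = 1"
  shows "mmult (mmult (diag_matrix w) (Vop x)) (adjm (diag_matrix w)) = Vop x"
proof -
  have "w k * cnj (w k) = 1" for k
    using assms by (metis complex_norm_square of_real_1 power_one)
  then show ?thesis
    by (auto simp: fun_eq_iff adjm_diag_matrix mmult_diag_matrix_left mmult_diag_matrix_right
        Vop_eq_diag_matrix diag_matrix_def)
qed

lemma diag_matrix_conj_EB:
  "mmult (mmult (diag_matrix w) (EB B X)) (adjm (diag_matrix w)) = EB (\<lambda>k l. w k * B k l * cnj (w l)) X"
  by (simp add: fun_eq_iff adjm_diag_matrix mmult_diag_matrix_left mmult_diag_matrix_right EB_def mult_ac)

lemma unimodular_of_covariant_equivalence:
  assumes V: "\<forall>x. mmult (mmult W (Vop x)) (adjm W) = Vop x"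
    and E: "\<forall>X. X \<in> sets borel \<and> X \<subseteq> {0..<2*pi} \<longrightarrow>
      mmult (mmult W (EB (\<lambda>k l. 1) X)) (adjm W) = EB B X"
    and diag: "\<forall>k. B k k = 1"
  shows "cmod (B k l) = 1"
proof (cases "k = l")
  case False
  define X where "X = {0..<pi / \<bar>real_of_int (k - l)\<bar>}"
  have "1 \<le> \<bar>real_of_int (k - l)\<bar>"
    using False by linarith
  then have "pi / \<bar>real_of_int (k - l)\<bar> \<le> pi"
    by (simp add: divide_le_eq)
  then have "X \<in> sets borel \<and> X \<subseteq> {0..<2*pi}"
    using pi_gt_zero by (auto simp: X_def)
  then have "EB (\<lambda>k l. W k k * cnj (W l l)) X k l = EB B X k l"
    using E diag_matrix_conj_EB[of "\<lambda>k. W k k" "\<lambda>k l. 1" X] Vop_conj_invariant_imp_diagonal(1)[OF V]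
    by simp
  then have "B k l = W k k * cnj (W l l)"
    using iX_half_period_neq_0[OF False] by (simp add: EB_def X_def)
  then show ?thesis
    using Vop_conj_invariant_imp_diagonal(2)[OF V] by (simp add: norm_mult)
qed (simp add: diag)

theorem corollary5p1:
  fixes B :: "int \<Rightarrow> int \<Rightarrow> complex"
  assumes disc: "\<forall>k l. cmod (B k l) \<le> 1"
    and psd: "psd_kernel B"
    and diag: "\<forall>k. B k k = 1"
  shows "((noise_op B = (\<lambda>k l. 0)) \<longleftrightarrow> (\<forall>n l. sB B n l = 0))
       \<and> ((\<forall>n l. sB B n l = 0) \<longleftrightarrow> (\<forall>k l. cmod (B k l) = 1))
       \<and> ((\<forall>k l. cmod (B k l) = 1) \<longleftrightarrow>
          (\<exists>W. unitary_matrix W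
             \<and> (\<forall>x. mmult (mmult W (Vop x)) (adjm W) = Vop x)
             \<and> (\<forall>X. X \<in> sets borel \<and> X \<subseteq> {0..<2*pi} \<longrightarrow>
                  mmult (mmult W (EB (\<lambda>k l. 1) X)) (adjm W) = EB B X)))"
proof -
  have covariant_iff: "(\<forall>k l. cmod (B k l) = 1) \<longleftrightarrow>
          (\<exists>W. unitary_matrix W
             \<and> (\<forall>x. mmult (mmult W (Vop x)) (adjm W) = Vop x)
             \<and> (\<forall>X. X \<in> sets borel \<and> X \<subseteq> {0..<2*pi} \<longrightarrow>
                  mmult (mmult W (EB (\<lambda>k l. 1) X)) (adjm W) = EB B X))"
    (is "?unimodular \<longleftrightarrow> (\<exists>W. ?covariant W)")
  proof
    assume unimodular: ?unimodular
    let ?W = "diag_matrix (\<lambda>k. B k 0)"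
    show "\<exists>W. ?covariant W"
    proof (intro exI[of _ ?W] conjI allI impI)
      show "unitary_matrix ?W"
        using unimodular by (simp add: unitary_matrix_diag_matrix)
      show "mmult (mmult ?W (Vop x)) (adjm ?W) = Vop x" for x
        using unimodular by (simp add: diag_matrix_conj_Vop)
      show "mmult (mmult ?W (EB (\<lambda>k l. 1) X)) (adjm ?W) = EB B X" for X
        unfolding diag_matrix_conj_EB
        by (simp only: mult_1_right flip: psd_kernel_unimodular_factor[OF psd diag unimodular])
    qed
  next
    assume "\<exists>W. ?covariant W"
    then obtain W where "?covariant W" ..
    then show ?unimodular
      using unimodular_of_covariant_equivalence[of W B, OF _ _ diag] by blast
  qed
  show ?thesis
    unfolding noise_op_eq_0_iff_unimodular[OF disc psd diag] sB_eq_0_iff_unimodular[OF disc diag] covariant_iff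
    by (rule conjI refl)+
qed

end
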